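(* Let $f$ be a weighted sub-insect count, $f(G)=\sum_H a_H\,\mathbf 1[H\sqsubseteq G]$. Then $f$ is additive (i.e., $f(G_1\uplus G_2)=f(G_1)+f(G_2)$ for all disjoint insects $G_1,G_2$) if and only if $a_H=0$ for every insect $H$ that is not connected.
   Context: Fix a ground set of vertices. An insect is a pair $H=(S,E)$ where $S$ is a finite nonempty set of vertices (the label set, $\underline V(H)$) and $E$ is a finite set of hyperedges (finite vertex sets) with $e\cap S\neq\emptyset$ for all $e\in E$. Its boundary is $B(H)=(\bigcup_{e\in E}e)\setminus S$ and its size is $|H|=|S|$. $H$ is connected if the hypergraph $(S,\{e\cap S:e\in E\})$ is connected. Insects $H_1=(S_1,E_1)$, $H_2=(S_2,E_2)$ are disjoint if $S_1\cap S_2=\emptyset$, $E_1\cap E_2=\emptyset$, $S_2\cap B(H_1)=\emptyset$ and $S_1\cap B(H_2)=\emptyset$; then $H_1\uplus H_2=(S_1\cup S_2,E_1\cup E_2)$. An insect is not connected exactly when it can be written as $H_1\uplus H_2$ for disjoint insects. For an insect $G=(S,E)$ and nonempty $S'\subseteq S$, the induced sub-insect is $G^+[S']=(S',\{e\in E:e\cap S'\ne\emptyset\})$; $H\sqsubseteq G$ means $H=G^+[S']$ for some such $S'$, and $\mathbf 1[H\sqsubseteq G]$ is its indicator. A weighted sub-insect count is a function on insects of the form $f(G)=\sum_H a_H\mathbf 1[H\sqsubseteq G]$, the sum over all insects $H$, with complex coefficients $a_H$ depending only on $H$ (the sum has finitely many nonzero terms for each $G$). *)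

theory Defs
  imports Complex_Main
begin

type_synonym 'v insect = "'v set \<times> 'v set set"

definition labels :: "'v insect \<Rightarrow> 'v set" where
  "labels H = fst H"

definition hedges :: "'v insect \<Rightarrow> 'v set set" where
  "hedges H = snd H"

definition is_insect :: "'v insect \<Rightarrow> bool" where
  "is_insect H \<longleftrightarrow> finite (labels H) \<and> labels H \<noteq> {} \<and> finite (hedges H)
     \<and> (\<forall>e\<in>hedges H. finite e \<and> e \<inter> labels H \<noteq> {})"

definition boundary :: "'v insect \<Rightarrow> 'v set" where
  "boundary H = (\<Union>(hedges H)) - labels H"

definition insect_adj :: "'v insect \<Rightarrow> ('v \<times> 'v) set" where
  "insect_adj H = {(x, y). \<exists>e\<in>hedges H. x \<in> e \<inter> labels H \<and> y \<in> e \<inter> labels H}"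

definition insect_connected :: "'v insect \<Rightarrow> bool" where
  "insect_connected H \<longleftrightarrow> (\<forall>x\<in>labels H. \<forall>y\<in>labels H. (x, y) \<in> (insect_adj H)\<^sup>*)"

definition insect_disjoint :: "'v insect \<Rightarrow> 'v insect \<Rightarrow> bool" where
  "insect_disjoint H1 H2 \<longleftrightarrow> labels H1 \<inter> labels H2 = {} \<and> hedges H1 \<inter> hedges H2 = {}
     \<and> labels H2 \<inter> boundary H1 = {} \<and> labels H1 \<inter> boundary H2 = {}"

definition insect_union :: "'v insect \<Rightarrow> 'v insect \<Rightarrow> 'v insect" where
  "insect_union H1 H2 = (labels H1 \<union> labels H2, hedges H1 \<union> hedges H2)"

definition induced :: "'v insect \<Rightarrow> 'v set \<Rightarrow> 'v insect" where
  "induced G S' = (S', {e \<in> hedges G. e \<inter> S' \<noteq> {}})"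

definition sub_insect :: "'v insect \<Rightarrow> 'v insect \<Rightarrow> bool" where
  "sub_insect H G \<longleftrightarrow> (\<exists>S'. S' \<noteq> {} \<and> S' \<subseteq> labels G \<and> H = induced G S')"

text \<open>Weighted sub-insect count with coefficients a: f(G) = sum of a_H over H \<sqsubseteq> G
  (only finitely many such H for an insect G).\<close>
definition wsic :: "('v insect \<Rightarrow> complex) \<Rightarrow> 'v insect \<Rightarrow> complex" where
  "wsic a G = (\<Sum>H\<in>{H. sub_insect H G}. a H)"

definition additive :: "('v insect \<Rightarrow> complex) \<Rightarrow> bool" where
  "additive f \<longleftrightarrow> (\<forall>G1 G2. is_insect G1 \<longrightarrow> is_insect G2 \<longrightarrow> insect_disjoint G1 G2 \<longrightarrow>
     f (insect_union G1 G2) = f G1 + f G2)"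

end

theory Submission
  imports Defs
begin

text \<open>Every sub-insect of \<open>G\<^sub>1 \<uplus> G\<^sub>2\<close> is induced by a label set that lies in \<open>G\<^sub>1\<close>, lies in
  \<open>G\<^sub>2\<close>, or straddles both. The first two kinds are exactly the sub-insects of \<open>G\<^sub>1\<close> and of
  \<open>G\<^sub>2\<close>, and the straddling ones are never connected, since no hyperedge of \<open>G\<^sub>1\<close> meets a
  label of \<open>G\<^sub>2\<close> or vice versa. Hence \<open>f(G\<^sub>1 \<uplus> G\<^sub>2) - f(G\<^sub>1) - f(G\<^sub>2)\<close> is the sum of \<open>a\<close> over
  disconnected sub-insects, which gives one direction. Conversely, every disconnected \<open>H\<close>
  splits as \<open>G\<^sub>1 \<uplus> G\<^sub>2\<close>; additivity makes the straddling sum vanish, and by induction on the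
  size all its terms except \<open>a\<^sub>H\<close> itself vanish already.\<close>

lemma labels_induced [simp]: "labels (induced G S) = S"
  by (simp add: induced_def labels_def)

lemma hedges_induced [simp]: "hedges (induced G S) = {e \<in> hedges G. e \<inter> S \<noteq> {}}"
  by (simp add: induced_def hedges_def)

lemma labels_insect_union [simp]: "labels (insect_union G1 G2) = labels G1 \<union> labels G2"
  by (simp add: insect_union_def labels_def)

lemma hedges_insect_union [simp]: "hedges (insect_union G1 G2) = hedges G1 \<union> hedges G2"
  by (simp add: insect_union_def hedges_def)

lemma insect_eqI: "labels G = labels H \<Longrightarrow> hedges G = hedges H \<Longrightarrow> G = H"
  by (simp add: labels_def hedges_def prod_eq_iff)

lemma wsic_eq_sum_induced:
  "wsic a G = (\<Sum>S\<in>{S. S \<noteq> {} \<and> S \<subseteq> labels G}. a (induced G S))"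
proof -
  have "{H. sub_insect H G} = induced G ` {S. S \<noteq> {} \<and> S \<subseteq> labels G}"
    unfolding sub_insect_def by auto
  moreover have "inj_on (induced G) {S. S \<noteq> {} \<and> S \<subseteq> labels G}"
    by (rule inj_onI) (metis labels_induced)
  ultimately show ?thesis
    unfolding wsic_def by (simp add: sum.reindex)
qed

lemma is_insect_induced:
  assumes "is_insect G" "S \<noteq> {}" "S \<subseteq> labels G"
  shows "is_insect (induced G S)"
  using assms unfolding is_insect_def by (auto intro: finite_subset)

lemma induced_labels:
  assumes "is_insect G"
  shows "induced G (labels G) = G"
  using assms unfolding is_insect_def by (intro insect_eqI) auto

lemma is_insect_insect_union:
  assumes "is_insect G1" "is_insect G2"
  shows "is_insect (insect_union G1 G2)"
  using assms unfolding is_insect_def by simp blast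

lemma insect_disjoint_sym: "insect_disjoint G1 G2 \<Longrightarrow> insect_disjoint G2 G1"
  unfolding insect_disjoint_def by blast

lemma insect_union_commute: "insect_union G1 G2 = insect_union G2 G1"
  unfolding insect_union_def by (simp add: Un_commute)

lemma insect_disjoint_hedge_misses_labels:
  assumes "insect_disjoint G1 G2" "e \<in> hedges G2"
  shows "e \<inter> labels G1 = {}"
  using assms unfolding insect_disjoint_def boundary_def by blast

lemma induced_insect_union_left:
  assumes "insect_disjoint G1 G2" "S \<subseteq> labels G1"
  shows "induced (insect_union G1 G2) S = induced G1 S"
proof -
  have "e \<inter> S = {}" if "e \<in> hedges G2" for e
    using insect_disjoint_hedge_misses_labels[OF assms(1) that] assms(2) by blast
  then show ?thesis
    unfolding induced_def by auto
qed

lemma induced_insect_union_right: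
  assumes "insect_disjoint G1 G2" "S \<subseteq> labels G2"
  shows "induced (insect_union G1 G2) S = induced G2 S"
  using induced_insect_union_left[OF insect_disjoint_sym[OF assms(1)] assms(2)]
  by (metis insect_union_commute)

definition straddling :: "'v insect \<Rightarrow> 'v insect \<Rightarrow> 'v set set" where
  "straddling G1 G2 =
     {S. S \<subseteq> labels G1 \<union> labels G2 \<and> S \<inter> labels G1 \<noteq> {} \<and> S \<inter> labels G2 \<noteq> {}}"

lemma finite_straddling:
  assumes "finite (labels G1)" "finite (labels G2)"
  shows "finite (straddling G1 G2)"
proof (rule finite_subset)
  show "straddling G1 G2 \<subseteq> Pow (labels G1 \<union> labels G2)"
    unfolding straddling_def by blast
qed (use assms in simp)

lemma wsic_insect_union:
  assumes d: "insect_disjoint G1 G2" and fin: "finite (labels G1)" "finite (labels G2)"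
  shows "wsic a (insect_union G1 G2) = wsic a G1 + wsic a G2
           + (\<Sum>S\<in>straddling G1 G2. a (induced (insect_union G1 G2) S))"
proof -
  let ?G = "insect_union G1 G2"
  let ?A = "{S. S \<noteq> {} \<and> S \<subseteq> labels G1}"
  let ?B = "{S. S \<noteq> {} \<and> S \<subseteq> labels G2}"
  let ?f = "\<lambda>S. a (induced ?G S)"
  have dis: "labels G1 \<inter> labels G2 = {}"
    using d unfolding insect_disjoint_def by blast
  have fin_AB: "finite ?A" "finite ?B"
    using fin by simp_all
  have "{S. S \<noteq> {} \<and> S \<subseteq> labels ?G} = (?A \<union> ?B) \<union> straddling G1 G2"
    unfolding straddling_def using dis by simp blast
  then have "wsic a ?G = sum ?f ((?A \<union> ?B) \<union> straddling G1 G2)"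
    by (simp add: wsic_eq_sum_induced)
  also have "\<dots> = sum ?f (?A \<union> ?B) + sum ?f (straddling G1 G2)"
  proof (rule sum.union_disjoint)
    show "(?A \<union> ?B) \<inter> straddling G1 G2 = {}"
      unfolding straddling_def using dis by blast
  qed (use fin fin_AB in \<open>auto simp: finite_straddling\<close>)
  also have "sum ?f (?A \<union> ?B) = sum ?f ?A + sum ?f ?B"
    using fin_AB dis by (intro sum.union_disjoint) blast+
  also have "sum ?f ?A = wsic a G1"
    by (simp add: wsic_eq_sum_induced induced_insect_union_left[OF d])
  also have "sum ?f ?B = wsic a G2"
    by (simp add: wsic_eq_sum_induced induced_insect_union_right[OF d])
  finally show ?thesis .
qed

lemma insect_adj_induced_union_stays_left:
  assumes d: "insect_disjoint G1 G2" and S: "S \<subseteq> labels G1 \<union> labels G2"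
    and uv: "(u, v) \<in> insect_adj (induced (insect_union G1 G2) S)" and u: "u \<in> labels G1"
  shows "v \<in> labels G1"
proof -
  obtain e where e: "e \<in> hedges G1 \<union> hedges G2" "u \<in> e" "v \<in> e \<inter> S"
    using uv unfolding insect_adj_def by auto
  have "e \<notin> hedges G2"
    using insect_disjoint_hedge_misses_labels[OF d] e(2) u by blast
  then have "e \<inter> labels G2 = {}"
    using insect_disjoint_hedge_misses_labels[OF insect_disjoint_sym[OF d]] e(1) by blast
  then show ?thesis
    using e(3) S by blast
qed

lemma straddling_induced_disconnected:
  assumes d: "insect_disjoint G1 G2" and S: "S \<in> straddling G1 G2"
  shows "\<not> insect_connected (induced (insect_union G1 G2) S)"
proof
  assume "insect_connected (induced (insect_union G1 G2) S)"
  moreover obtain x y where "x \<in> S \<inter> labels G1" "y \<in> S \<inter> labels G2"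
    using S unfolding straddling_def by blast
  ultimately have path: "(x, y) \<in> (insect_adj (induced (insect_union G1 G2) S))\<^sup>*"
    and "x \<in> labels G1" "y \<in> labels G2"
    unfolding insect_connected_def by auto
  from path \<open>x \<in> labels G1\<close> have "y \<in> labels G1"
    by (induction rule: rtrancl_induct)
       (use insect_adj_induced_union_stays_left[OF d] S in \<open>auto simp: straddling_def\<close>)
  with \<open>y \<in> labels G2\<close> d show False
    unfolding insect_disjoint_def by blast
qed

lemma is_insect_induced_straddling:
  assumes "is_insect G1" "is_insect G2" "S \<in> straddling G1 G2"
  shows "is_insect (induced (insect_union G1 G2) S)"
proof (rule is_insect_induced)
  show "is_insect (insect_union G1 G2)"
    using assms(1,2) by (rule is_insect_insect_union)
qed (use assms(3) in \<open>auto simp: straddling_def\<close>)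

lemma not_connected_imp_insect_union:
  assumes H: "is_insect H" and nc: "\<not> insect_connected H"
  obtains G1 G2 where "is_insect G1" "is_insect G2" "insect_disjoint G1 G2"
    "H = insect_union G1 G2"
proof -
  obtain x y where xy: "x \<in> labels H" "y \<in> labels H" "(x, y) \<notin> (insect_adj H)\<^sup>*"
    using nc unfolding insect_connected_def by auto
  define S1 where "S1 = {z \<in> labels H. (x, z) \<in> (insect_adj H)\<^sup>*}"
  define S2 where "S2 = labels H - S1"
  have no_bridge: "e \<inter> S1 = {} \<or> e \<inter> S2 = {}" if e: "e \<in> hedges H" for e
  proof (rule ccontr)
    assume "\<not> (e \<inter> S1 = {} \<or> e \<inter> S2 = {})"
    then obtain z1 z2 where z: "z1 \<in> e \<inter> S1" "z2 \<in> e \<inter> S2"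
      by auto
    then have "(z1, z2) \<in> insect_adj H" "(x, z1) \<in> (insect_adj H)\<^sup>*"
      using e unfolding insect_adj_def S1_def S2_def by auto
    then have "(x, z2) \<in> (insect_adj H)\<^sup>*"
      by simp
    then show False
      using z unfolding S1_def S2_def by auto
  qed
  have S: "x \<in> S1" "y \<in> S2" "S1 \<subseteq> labels H" "S2 \<subseteq> labels H" "S1 \<inter> S2 = {}"
    using xy unfolding S1_def S2_def by auto
  then have "is_insect (induced H S1)" "is_insect (induced H S2)"
    by (auto intro: is_insect_induced[OF H])
  moreover have "insect_disjoint (induced H S1) (induced H S2)"
    unfolding insect_disjoint_def boundary_def using no_bridge S(5) by auto
  moreover have "H = insect_union (induced H S1) (induced H S2)"
  proof -
    have "labels H = S1 \<union> S2"
      using S(3) unfolding S2_def by blast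
    moreover have "hedges H = {e \<in> hedges H. e \<inter> S1 \<noteq> {}} \<union> {e \<in> hedges H. e \<inter> S2 \<noteq> {}}"
      using H calculation unfolding is_insect_def by blast
    ultimately show ?thesis
      by (intro insect_eqI) simp_all
  qed
  ultimately show ?thesis
    using that by blast
qed

lemma coeff_disconnected_zero_imp_additive:
  fixes a :: "'v insect \<Rightarrow> complex"
  assumes zero: "\<forall>H. is_insect H \<and> \<not> insect_connected H \<longrightarrow> a H = 0"
  shows "additive (wsic a)"
  unfolding additive_def
proof (intro allI impI)
  fix G1 G2 :: "'v insect"
  assume G: "is_insect G1" "is_insect G2" "insect_disjoint G1 G2"
  have "a (induced (insect_union G1 G2) S) = 0" if "S \<in> straddling G1 G2" for S
    using zero is_insect_induced_straddling[OF G(1,2) that]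
      straddling_induced_disconnected[OF G(3) that] by blast
  then show "wsic a (insect_union G1 G2) = wsic a G1 + wsic a G2"
    using wsic_insect_union[OF G(3)] G(1,2) unfolding is_insect_def by simp
qed

lemma additive_imp_coeff_disconnected_zero:
  fixes a :: "'v insect \<Rightarrow> complex"
  assumes add: "additive (wsic a)"
  shows "is_insect H \<Longrightarrow> \<not> insect_connected H \<Longrightarrow> a H = 0"
proof (induction H rule: measure_induct_rule[where f = "\<lambda>H. card (labels H)"])
  case (less H)
  obtain G1 G2 where G: "is_insect G1" "is_insect G2" "insect_disjoint G1 G2"
    and H: "H = insect_union G1 G2"
    using not_connected_imp_insect_union[OF less.prems] .
  have fin: "finite (labels G1)" "finite (labels G2)" "labels G1 \<noteq> {}" "labels G2 \<noteq> {}"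
    using G(1,2) unfolding is_insect_def by auto
  have "wsic a H = wsic a G1 + wsic a G2"
    using add G H unfolding additive_def by blast
  then have "(\<Sum>S\<in>straddling G1 G2. a (induced H S)) = 0"
    using wsic_insect_union[OF G(3) fin(1,2)] H by simp
  moreover have "(\<Sum>S\<in>straddling G1 G2. a (induced H S)) = (\<Sum>S\<in>{labels H}. a (induced H S))"
  proof (rule sum.mono_neutral_right)
    show "finite (straddling G1 G2)" "{labels H} \<subseteq> straddling G1 G2"
      using fin H by (auto simp: finite_straddling straddling_def)
    show "\<forall>S\<in>straddling G1 G2 - {labels H}. a (induced H S) = 0"
    proof
      fix S assume S: "S \<in> straddling G1 G2 - {labels H}"
      then have "S \<subset> labels H"
        using H unfolding straddling_def by auto
      then have "card (labels (induced H S)) < card (labels H)"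
        using fin H by (simp add: psubset_card_mono)
      then show "a (induced H S) = 0"
        using less.IH S H is_insect_induced_straddling[OF G(1,2)]
          straddling_induced_disconnected[OF G(3)] by blast
    qed
  qed
  ultimately show ?case
    using induced_labels[OF less.prems(1)] by simp
qed

theorem lemma3p2:
  fixes a :: "'v insect \<Rightarrow> complex"
  shows "additive (wsic a) \<longleftrightarrow> (\<forall>H. is_insect H \<and> \<not> insect_connected H \<longrightarrow> a H = 0)"
  using additive_imp_coeff_disconnected_zero coeff_disconnected_zero_imp_additive by blast

end
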